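(* Let $q\ge 3$ be odd and $n\ge 1$. There exists a quasi-complementary Lee metric Gray code of $q$-ary $n$-tuples.
   Context: Lee distance between $v,u\in\mathbb{Z}_q^n$ is $\sum_{i}\min\{|v_i-u_i|,q-|v_i-u_i|\}$ (entries regarded as integers in $\{0,\ldots,q-1\}$). A quasi-complementary Lee metric Gray code of $q$-ary $n$-tuples is an ordering $G(0),\ldots,G(q^n-1)$ of all words of $\mathbb{Z}_q^n$ such that consecutive words $G(i),G(i+1)$ ($0\le i<q^n-1$) have Lee distance $1$ and $G((i+q^{n-1})\bmod q^n)=G(i)+(1,1,\ldots,1)$ for all $i$, with addition in $\mathbb{Z}_q^n$. *)

theory Defs
  imports Main
begin

definition words :: "nat \<Rightarrow> nat \<Rightarrow> (nat \<Rightarrow> nat) set" where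
  "words q n = {v. (\<forall>i<n. v i < q) \<and> (\<forall>i\<ge>n. v i = 0)}"

definition lee_dist :: "nat \<Rightarrow> nat \<Rightarrow> (nat \<Rightarrow> nat) \<Rightarrow> (nat \<Rightarrow> nat) \<Rightarrow> nat" where
  "lee_dist q n v u =
     (\<Sum>i<n. let d = (if v i \<ge> u i then v i - u i else u i - v i) in min d (q - d))"

definition add_ones :: "nat \<Rightarrow> nat \<Rightarrow> (nat \<Rightarrow> nat) \<Rightarrow> (nat \<Rightarrow> nat)" where
  "add_ones q n v = (\<lambda>i. if i < n then (v i + 1) mod q else 0)"

definition quasi_compl_lee_gray_code ::
  "nat \<Rightarrow> nat \<Rightarrow> (nat \<Rightarrow> (nat \<Rightarrow> nat)) \<Rightarrow> bool" where
  "quasi_compl_lee_gray_code q n G \<longleftrightarrow>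
     bij_betw G {0..<q ^ n} (words q n) \<and>
     (\<forall>i. i + 1 < q ^ n \<longrightarrow> lee_dist q n (G i) (G (i + 1)) = 1) \<and>
     (\<forall>i<q ^ n. G ((i + q ^ (n - 1)) mod q ^ n) = add_ones q n (G i))"

end

theory Submission
  imports Defs "HOL-Number_Theory.Cong"
begin

(*
  Write an index i < q^(m+1) as i = k q^m + r with r < q^m.  If V is a Lee Gray code of length m
  whose last word is its first word plus (1,...,1), then i |-> k (1,...,1) + V r, with k as the
  new last coordinate, is a Lee Gray code of length m + 1: within a block of q^m indices
  consecutive words differ as in V, and across blocks the first m coordinates agree thanks to
  the end condition on V while the last coordinate moves from k to k + 1.  Adding q^m to the
  index adds (1,...,1) to the word, which is quasi-complementarity.  For odd q, a variant of
  the reflected q-ary Gray code satisfies the end condition.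
*)

lemma bij_betw_endo:
  "finite A \<Longrightarrow> inj_on f A \<Longrightarrow> f ` A \<subseteq> A \<Longrightarrow> bij_betw f A A"
  by (simp add: bij_betw_def endo_inj_surj)

lemma bij_betw_div_mod:
  assumes "0 < (N::nat)"
  shows "bij_betw (\<lambda>i. (i div N, i mod N)) {0..<q * N} ({0..<q} \<times> {0..<N})"
proof (rule bij_betw_byWitness[where f' = "\<lambda>(k, r). k * N + r"])
  have "k * N + r < q * N" if "k < q" "r < N" for k r
  proof -
    have "k * N + r < Suc k * N" using that by simp
    also have "\<dots> \<le> q * N" using that by (intro mult_le_mono1) simp
    finally show ?thesis .
  qed
  then show "(\<lambda>(k, r). k * N + r) ` ({0..<q} \<times> {0..<N}) \<subseteq> {0..<q * N}"
    by auto
qed (use assms in \<open>auto simp: less_mult_imp_div_less\<close>)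

lemma bij_betw_fun_upd_words:
  "bij_betw (\<lambda>(c, v). v(m := c)) ({0..<q} \<times> words q m) (words q (Suc m))"
  by (rule bij_betw_byWitness[where f' = "\<lambda>w. (w m, w(m := 0))"])
    (auto simp: words_def less_Suc_eq)

definition lee_adjacent :: "nat \<Rightarrow> nat \<Rightarrow> (nat \<Rightarrow> nat) \<Rightarrow> (nat \<Rightarrow> nat) \<Rightarrow> bool" where
  "lee_adjacent q n v u \<longleftrightarrow> (\<exists>j<n. (\<forall>i. i \<noteq> j \<longrightarrow> v i = u i) \<and>
      (v j = Suc (u j) mod q \<or> u j = Suc (v j) mod q))"

definition add_const :: "nat \<Rightarrow> nat \<Rightarrow> nat \<Rightarrow> (nat \<Rightarrow> nat) \<Rightarrow> nat \<Rightarrow> nat" where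
  "add_const q n c v = (\<lambda>i. if i < n then (v i + c) mod q else 0)"

lemma lee_adjacentI:
  "j < n \<Longrightarrow> (\<And>i. i \<noteq> j \<Longrightarrow> v i = u i) \<Longrightarrow>
    v j = Suc (u j) mod q \<or> u j = Suc (v j) mod q \<Longrightarrow> lee_adjacent q n v u"
  unfolding lee_adjacent_def by blast

lemma lee_adjacentE:
  assumes "lee_adjacent q n v u"
  obtains j where "j < n" "\<And>i. i \<noteq> j \<Longrightarrow> v i = u i"
    "v j = Suc (u j) mod q \<or> u j = Suc (v j) mod q"
  using assms unfolding lee_adjacent_def by blast

lemma lee_adjacent_sym: "lee_adjacent q n v u \<Longrightarrow> lee_adjacent q n u v"
  unfolding lee_adjacent_def by metis

lemma lee_dist_eq_1_if_lee_adjacent: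
  assumes "lee_adjacent q n v u" "v \<in> words q n" "u \<in> words q n" "2 \<le> q"
  shows "lee_dist q n v u = 1"
proof -
  obtain j where j: "j < n" "\<And>i. i \<noteq> j \<Longrightarrow> v i = u i"
      "v j = Suc (u j) mod q \<or> u j = Suc (v j) mod q"
    using assms(1) by (elim lee_adjacentE) blast
  have "v j < q" "u j < q"
    using assms(2,3) \<open>j < n\<close> unfolding words_def by auto
  moreover have "Suc x mod q = (if Suc x = q then 0 else Suc x)" if "x < q" for x
    using that by (simp add: mod_Suc)
  ultimately have "(v j = Suc (u j) \<or> u j = Suc (v j)) \<or> (v j = 0 \<and> u j = q - 1) \<or> (u j = 0 \<and> v j = q - 1)"
    using j(3) by (auto split: if_splits)
  then have "(let d = if u j \<le> v j then v j - u j else u j - v j in min d (q - d)) = 1"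
    using assms(4) by (auto simp: Let_def)
  then have "lee_dist q n v u = (\<Sum>i<n. if i = j then 1 else 0)"
    unfolding lee_dist_def using j(2) by (intro sum.cong) (auto simp: Let_def)
  then show ?thesis
    using \<open>j < n\<close> by simp
qed

lemma lee_adjacent_reversed:
  assumes "\<And>j. Suc j < N \<Longrightarrow> lee_adjacent q n (V j) (V (Suc j))" "Suc r < N"
  shows "lee_adjacent q n (V (N - 1 - r)) (V (N - 1 - Suc r))"
proof -
  have "N - 1 - r = Suc (N - 1 - Suc r)"
    using assms(2) by simp
  then show ?thesis
    using assms(1)[of "N - 1 - Suc r"] assms(2) by (simp add: lee_adjacent_sym)
qed

lemma lee_adjacent_fun_upd:
  assumes "lee_adjacent q m v u"
  shows "lee_adjacent q (Suc m) (v(m := c)) (u(m := c))"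
proof -
  obtain j where "j < m" "\<And>i. i \<noteq> j \<Longrightarrow> v i = u i"
      "v j = Suc (u j) mod q \<or> u j = Suc (v j) mod q"
    using assms by (elim lee_adjacentE) blast
  then show ?thesis
    by (intro lee_adjacentI[of j]) auto
qed

lemma lee_adjacent_fun_upd_Suc:
  "lee_adjacent q (Suc m) (v(m := c mod q)) (v(m := Suc c mod q))"
  by (intro lee_adjacentI[of m]) (simp_all add: mod_Suc_eq)

lemma lee_adjacent_add_const:
  assumes "lee_adjacent q m v u" "m \<le> n"
  shows "lee_adjacent q n (add_const q n c v) (add_const q n c u)"
proof -
  obtain j where j: "j < m" "\<And>i. i \<noteq> j \<Longrightarrow> v i = u i"
      "v j = Suc (u j) mod q \<or> u j = Suc (v j) mod q"
    using assms(1) by (elim lee_adjacentE) blast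
  then have "(v j + c) mod q = Suc ((u j + c) mod q) mod q \<or>
             (u j + c) mod q = Suc ((v j + c) mod q) mod q"
    by (auto simp: mod_simps)
  then show ?thesis
    using j assms(2) by (intro lee_adjacentI[of j]) (auto simp: add_const_def)
qed

lemma add_ones_eq_add_const: "add_ones q n = add_const q n 1"
  by (simp add: fun_eq_iff add_ones_def add_const_def)

lemma add_const_add_const: "add_const q n a (add_const q n b v) = add_const q n (a + b) v"
  by (simp add: fun_eq_iff add_const_def mod_add_left_eq add.assoc add.commute[of a b])

lemma add_const_mod: "add_const q n (c mod q) = add_const q n c"
  by (simp add: fun_eq_iff add_const_def mod_simps)

lemma add_const_Suc:
  "v \<in> words q m \<Longrightarrow> add_const q (Suc m) c v = (add_const q m c v)(m := c mod q)"
  by (simp add: fun_eq_iff add_const_def words_def less_Suc_eq)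

lemma add_const_in_words: "0 < q \<Longrightarrow> add_const q n c v \<in> words q n"
  by (simp add: add_const_def words_def)

lemma inj_on_add_const: "inj_on (add_const q n c) (words q n)"
proof (rule inj_onI)
  fix v u
  assume v: "v \<in> words q n" and u: "u \<in> words q n" and eq: "add_const q n c v = add_const q n c u"
  show "v = u"
  proof
    fix i
    show "v i = u i"
    proof (cases "i < n")
      case True
      then have "[v i + c = u i + c] (mod q)"
        using fun_cong[OF eq, of i] by (simp add: add_const_def cong_def)
      then have "v i mod q = u i mod q"
        using cong_add_rcancel_nat unfolding cong_def by blast
      then show ?thesis
        using True v u by (simp add: words_def)
    next
      case False
      then show ?thesis
        using v u by (simp add: words_def)
    qed
  qed
qed

definition lee_gray_code :: "nat \<Rightarrow> nat \<Rightarrow> (nat \<Rightarrow> nat \<Rightarrow> nat) \<Rightarrow> bool" where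
  "lee_gray_code q n G \<longleftrightarrow> bij_betw G {0..<q ^ n} (words q n) \<and>
     (\<forall>i. Suc i < q ^ n \<longrightarrow> lee_adjacent q n (G i) (G (Suc i)))"

definition diagonal_extension :: "nat \<Rightarrow> nat \<Rightarrow> (nat \<Rightarrow> nat \<Rightarrow> nat) \<Rightarrow> nat \<Rightarrow> nat \<Rightarrow> nat" where
  "diagonal_extension q m V i = add_const q (Suc m) (i div q ^ m) (V (i mod q ^ m))"

lemma bij_betw_diagonal_extension:
  assumes "0 < q" and V: "bij_betw V {0..<q ^ m} (words q m)"
  shows "bij_betw (diagonal_extension q m V) {0..<q ^ Suc m} (words q (Suc m))"
proof -
  let ?shift = "\<lambda>(k, v). (k, add_const q m k v)"
  have "finite (words q m)"
    using V bij_betw_finite by blast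
  then have shift: "bij_betw ?shift ({0..<q} \<times> words q m) ({0..<q} \<times> words q m)"
    using inj_on_add_const add_const_in_words[OF \<open>0 < q\<close>]
    by (intro bij_betw_endo) (auto simp: inj_on_def)
  have "bij_betw (\<lambda>i. (i div q ^ m, i mod q ^ m)) {0..<q * q ^ m} ({0..<q} \<times> {0..<q ^ m})"
    using \<open>0 < q\<close> by (simp add: bij_betw_div_mod)
  from bij_betw_trans[OF bij_betw_trans[OF bij_betw_trans[OF this bij_betw_map_prod[OF bij_betw_id V]]
      shift] bij_betw_fun_upd_words]
  have "bij_betw ((\<lambda>(c, v). v(m := c)) \<circ> (?shift \<circ> (map_prod id V \<circ> (\<lambda>i. (i div q ^ m, i mod q ^ m)))))
      {0..<q * q ^ m} (words q (Suc m))" .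
  moreover have "diagonal_extension q m V i =
      ((\<lambda>(c, v). v(m := c)) \<circ> (?shift \<circ> (map_prod id V \<circ> (\<lambda>i. (i div q ^ m, i mod q ^ m))))) i"
    if "i \<in> {0..<q * q ^ m}" for i
  proof -
    have "V (i mod q ^ m) \<in> words q m"
      using V \<open>0 < q\<close> bij_betw_apply by fastforce
    moreover have "i div q ^ m < q"
      using that by (simp add: less_mult_imp_div_less mult.commute)
    ultimately show ?thesis
      unfolding diagonal_extension_def by (simp add: add_const_Suc del: fun_upd_apply)
  qed
  ultimately have "bij_betw (diagonal_extension q m V) {0..<q * q ^ m} (words q (Suc m))"
    using bij_betw_cong by blast
  then show ?thesis
    by simp
qed

lemma lee_adjacent_diagonal_extension:
  assumes "0 < q" "lee_gray_code q m V" and last: "V (q ^ m - 1) = add_ones q m (V 0)"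
    and "Suc i < q ^ Suc m"
  shows "lee_adjacent q (Suc m) (diagonal_extension q m V i) (diagonal_extension q m V (Suc i))"
proof -
  define N where "N = q ^ m"
  define k where "k = i div N"
  define r where "r = i mod N"
  have "0 < N"
    using \<open>0 < q\<close> by (simp add: N_def)
  then have "r < N"
    by (simp add: r_def)
  have V: "bij_betw V {0..<N} (words q m)" "\<And>j. Suc j < N \<Longrightarrow> lee_adjacent q m (V j) (V (Suc j))"
    using assms(2) by (auto simp: lee_gray_code_def N_def)
  show ?thesis
  proof (cases "Suc r < N")
    case True
    then have "Suc i div N = k" "Suc i mod N = Suc r"
      by (simp_all add: k_def r_def div_Suc mod_Suc)
    then show ?thesis
      using V(2)[OF True]
      by (simp add: diagonal_extension_def lee_adjacent_add_const flip: N_def k_def r_def)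
  next
    case False
    then have "r = N - 1"
      using \<open>r < N\<close> by simp
    have "Suc i div N = Suc k" "Suc i mod N = 0"
      using False \<open>r < N\<close> by (simp_all add: k_def r_def div_Suc mod_Suc)
    moreover have "V r \<in> words q m" "V 0 \<in> words q m"
      using bij_betw_apply[OF V(1)] \<open>0 < N\<close> \<open>r < N\<close> by auto
    moreover have "add_const q m k (V r) = add_const q m (Suc k) (V 0)"
      using \<open>r = N - 1\<close> last by (simp add: N_def add_ones_eq_add_const add_const_add_const)
    ultimately show ?thesis
      using lee_adjacent_fun_upd_Suc
      by (simp add: diagonal_extension_def add_const_Suc flip: N_def k_def r_def)
  qed
qed

lemma diagonal_extension_shift:
  assumes "0 < q"
  shows "diagonal_extension q m V ((i + q ^ m) mod q ^ Suc m) = add_ones q (Suc m) (diagonal_extension q m V i)"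
proof -
  define N where "N = q ^ m"
  have "0 < N"
    using assms by (simp add: N_def)
  have "(i + N) mod (N * q) = N * (Suc (i div N) mod q) + i mod N"
    using \<open>0 < N\<close> by (simp add: mod_mult2_eq div_add_self2)
  then have "(i + N) mod (N * q) div N = Suc (i div N) mod q" "(i + N) mod (N * q) mod N = i mod N"
    using \<open>0 < N\<close> by simp_all
  then show ?thesis
    by (simp add: diagonal_extension_def add_const_mod add_ones_eq_add_const add_const_add_const
        mult.commute[of q] flip: N_def)
qed

theorem quasi_compl_lee_gray_code_diagonal_extension:
  assumes "2 \<le> q" "lee_gray_code q m V" "V (q ^ m - 1) = add_ones q m (V 0)"
  shows "quasi_compl_lee_gray_code q (Suc m) (diagonal_extension q m V)"
proof -
  have "0 < q"
    using assms(1) by simp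
  have bij: "bij_betw (diagonal_extension q m V) {0..<q ^ Suc m} (words q (Suc m))"
    using bij_betw_diagonal_extension[OF \<open>0 < q\<close>] assms(2) unfolding lee_gray_code_def by blast
  have "lee_dist q (Suc m) (diagonal_extension q m V i) (diagonal_extension q m V (i + 1)) = 1"
    if "i + 1 < q ^ Suc m" for i
  proof (rule lee_dist_eq_1_if_lee_adjacent)
    show "lee_adjacent q (Suc m) (diagonal_extension q m V i) (diagonal_extension q m V (i + 1))"
      using \<open>0 < q\<close> assms(2,3) that by (simp add: lee_adjacent_diagonal_extension)
    show "diagonal_extension q m V i \<in> words q (Suc m)"
      "diagonal_extension q m V (i + 1) \<in> words q (Suc m)"
      using bij_betw_apply[OF bij] that by simp_all
  qed (use assms(1) in simp)
  then show ?thesis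
    unfolding quasi_compl_lee_gray_code_def
    using bij diagonal_extension_shift[OF \<open>0 < q\<close>] by simp
qed

lemma inj_on_diff_mod: "inj_on (\<lambda>k. (q - k) mod q) {0..<q :: nat}"
proof (rule inj_onI)
  fix k k'
  assume "k \<in> {0..<q}" "k' \<in> {0..<q}" "(q - k) mod q = (q - k') mod q"
  then show "k = k'"
    by (cases "k = 0"; cases "k' = 0") auto
qed

text \<open>The leading digit runs through 0, q-1, ..., 1 rather than 0, 1, ..., q-1: for odd q the
  last block is then traversed forwards and ends at (1,...,1).\<close>

primrec reflected_gray :: "nat \<Rightarrow> nat \<Rightarrow> nat \<Rightarrow> nat \<Rightarrow> nat" where
  "reflected_gray q 0 i = (\<lambda>_. 0)"
| "reflected_gray q (Suc m) i =
     (reflected_gray q m (if even (i div q ^ m) then i mod q ^ m else q ^ m - 1 - i mod q ^ m))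
       (m := (q - i div q ^ m) mod q)"

lemma reflected_gray_Suc_div_mod:
  "N = q ^ m \<Longrightarrow> i div N = k \<Longrightarrow> i mod N = r \<Longrightarrow>
    reflected_gray q (Suc m) i = (reflected_gray q m (if even k then r else N - 1 - r))(m := (q - k) mod q)"
  by simp

lemma reflected_gray_0: "reflected_gray q m 0 = (\<lambda>_. 0)"
  by (induction m) simp_all

lemma reflected_gray_last:
  assumes "odd q"
  shows "reflected_gray q m (q ^ m - 1) = add_ones q m (reflected_gray q m 0)"
proof (induction m)
  case 0
  then show ?case
    by (simp add: add_ones_def)
next
  case (Suc m)
  define N where "N = q ^ m"
  have "0 < N"
    using odd_pos[OF assms] by (simp add: N_def)
  define r where "r = N - 1"
  have "r < N"
    using \<open>0 < N\<close> by (simp add: r_def)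
  moreover have "q ^ Suc m - 1 = (q - 1) * N + r"
    using odd_pos[OF assms] \<open>0 < N\<close> by (simp add: N_def r_def diff_mult_distrib)
  ultimately have "(q ^ Suc m - 1) div N = q - 1" "(q ^ Suc m - 1) mod N = r"
    by simp_all
  moreover have "even (q - 1)" "q - (q - 1) = 1"
    using assms odd_pos[OF assms] by simp_all
  ultimately show ?case
    using Suc.IH by (simp add: fun_eq_iff add_ones_def reflected_gray_0 r_def flip: N_def)
qed

lemma bij_betw_reflected_gray:
  assumes "0 < q"
  shows "bij_betw (reflected_gray q m) {0..<q ^ m} (words q m)"
proof (induction m)
  case 0
  have "words q 0 = {\<lambda>_. 0}"
    by (auto simp: words_def)
  then show ?case
    by (simp add: bij_betw_def)
next
  case (Suc m)
  define N where "N = q ^ m"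
  let ?turn = "\<lambda>(k, r). ((q - k) mod q, if even k then r else N - 1 - r)"
  have "inj_on ?turn ({0..<q} \<times> {0..<N})"
  proof (rule inj_onI)
    fix x y
    assume "x \<in> {0..<q} \<times> {0..<N}" "y \<in> {0..<q} \<times> {0..<N}" and eq: "?turn x = ?turn y"
    moreover obtain k r k' r' where [simp]: "x = (k, r)" "y = (k', r')"
      by fastforce
    ultimately have "k = k'"
      using inj_onD[OF inj_on_diff_mod[of q], of k k'] by simp
    with eq show "x = y"
      using \<open>x \<in> _\<close> \<open>y \<in> _\<close> by (auto split: if_splits)
  qed
  then have "bij_betw ?turn ({0..<q} \<times> {0..<N}) ({0..<q} \<times> {0..<N})"
    using assms by (intro bij_betw_endo) auto
  moreover have "bij_betw (\<lambda>i. (i div N, i mod N)) {0..<q * N} ({0..<q} \<times> {0..<N})"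
    using assms by (simp add: bij_betw_div_mod N_def)
  ultimately have "bij_betw ((\<lambda>(c, v). v(m := c)) \<circ>
      (map_prod id (reflected_gray q m) \<circ> (?turn \<circ> (\<lambda>i. (i div N, i mod N)))))
      {0..<q * N} (words q (Suc m))"
    using bij_betw_trans[OF bij_betw_trans[OF bij_betw_trans bij_betw_map_prod[OF bij_betw_id Suc.IH]]
        bij_betw_fun_upd_words]
    by (simp only: N_def)
  moreover have "reflected_gray q (Suc m) = (\<lambda>(c, v). v(m := c)) \<circ>
      (map_prod id (reflected_gray q m) \<circ> (?turn \<circ> (\<lambda>i. (i div N, i mod N))))"
    by (simp add: fun_eq_iff N_def)
  ultimately have "bij_betw (reflected_gray q (Suc m)) {0..<q * N} (words q (Suc m))"
    by (simp only:)
  then show ?case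
    by (simp only: N_def power_Suc)
qed

lemma lee_adjacent_reflected_gray:
  "Suc i < q ^ m \<Longrightarrow> lee_adjacent q m (reflected_gray q m i) (reflected_gray q m (Suc i))"
proof (induction m arbitrary: i)
  case 0
  then show ?case
    by simp
next
  case (Suc m)
  define N where "N = q ^ m"
  define k where "k = i div N"
  define r where "r = i mod N"
  let ?refl = "\<lambda>k r. if even k then r else N - 1 - r"
  have "0 < q"
    using Suc.prems by (rule contrapos_pp) simp
  then have "r < N"
    by (simp add: r_def N_def)
  show ?case
  proof (cases "Suc r < N")
    case True
    then have Suc_i: "Suc i div N = k" "Suc i mod N = Suc r"
      by (simp_all add: k_def r_def div_Suc mod_Suc)
    have "lee_adjacent q m (reflected_gray q m (?refl k r)) (reflected_gray q m (?refl k (Suc r)))"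
      using Suc.IH lee_adjacent_reversed[of N] \<open>Suc r < N\<close> by (simp add: N_def)
    then show ?thesis
      unfolding reflected_gray_Suc_div_mod[OF N_def k_def[symmetric] r_def[symmetric]]
        reflected_gray_Suc_div_mod[OF N_def Suc_i]
      by (rule lee_adjacent_fun_upd)
  next
    case False
    then have "r = N - 1"
      using \<open>r < N\<close> by simp
    from False have Suc_i: "Suc i div N = Suc k" "Suc i mod N = 0"
      using \<open>r < N\<close> by (simp_all add: k_def r_def div_Suc mod_Suc)
    have "Suc i div N < q"
      using Suc.prems by (simp add: N_def less_mult_imp_div_less)
    then have "(q - k) mod q = Suc (q - Suc k) mod q"
      using Suc_i by (simp add: Suc_diff_Suc)
    moreover have "?refl k r = ?refl (Suc k) 0"
      using \<open>r = N - 1\<close> by simp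
    ultimately show ?thesis
      unfolding reflected_gray_Suc_div_mod[OF N_def k_def[symmetric] r_def[symmetric]]
        reflected_gray_Suc_div_mod[OF N_def Suc_i]
      by (metis lee_adjacent_sym lee_adjacent_fun_upd_Suc)
  qed
qed

lemma lee_gray_code_reflected_gray: "0 < q \<Longrightarrow> lee_gray_code q m (reflected_gray q m)"
  by (simp add: lee_gray_code_def bij_betw_reflected_gray lee_adjacent_reflected_gray)

theorem corollary2:
  fixes q n :: nat
  assumes "q \<ge> 3" and "odd q" and "n \<ge> 1"
  shows "\<exists>G. quasi_compl_lee_gray_code q n G"
proof -
  obtain m where "n = Suc m"
    using \<open>n \<ge> 1\<close> by (cases n) auto
  have "quasi_compl_lee_gray_code q (Suc m) (diagonal_extension q m (reflected_gray q m))"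
    using assms by (intro quasi_compl_lee_gray_code_diagonal_extension lee_gray_code_reflected_gray
        reflected_gray_last) simp_all
  then show ?thesis
    using \<open>n = Suc m\<close> by blast
qed

end
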